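(* Let $G$ be an abelian group and let $A,B,C$ be nonempty finite subsets of $G$ with $1\in C$. Then either $ABC=AB$ or $|ABC|\geq |A|+|B|$.
   Context: For subsets $X,Y,Z$ of a multiplicative group $G$, $XY=\{xy\mid x\in X,\ y\in Y\}$ and $XYZ=\{xyz\mid x\in X,\ y\in Y,\ z\in Z\}$. *)

theory Defs
  imports "HOL-Algebra.Coset"
begin

end

theory Submission
  imports Defs
begin

(* The heart of the proof is a Kneser-type growth bound:
   if A, B are finite and nonempty and the translate of X = AB by c differs from X, then
   |X \<union> Xc| \<ge> |A| + |B|.  It is proved by strong induction on |B| via Dyson's e-transform
     A(e) = A \<union> Be,   B(e) = {b \<in> B | be \<in> A},
   which preserves |A| + |B| and shrinks the product set.  If some b \<in> B makes every
   element of B b\<inverse> a period of A, then X is stable under these |B| elements, and a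
   translate of B b\<inverse> inside Xc but outside X supplies |B| new elements on top of
   |X| \<ge> |A|.  Otherwise, for each b \<in> B a suitable e-transform keeps b but has smaller
   second factor, so by induction its product set (which contains Ab and lies inside X)
   is c-stable; X is the union of these c-stable sets, hence itself c-stable.
   The main theorem follows because X \<union> Xc \<subseteq> XC whenever 1, c \<in> C, and XC = X as soon
   as every c \<in> C stabilises X. *)

context comm_group
begin

lemma r_coset_mem: "x \<in> X #> g \<longleftrightarrow> (\<exists>y\<in>X. x = y \<otimes> g)"
  unfolding r_coset_def by auto

lemma set_mult_mem: "x \<in> X <#> Y \<longleftrightarrow> (\<exists>a\<in>X. \<exists>b\<in>Y. x = a \<otimes> b)"
  unfolding set_mult_def by auto

lemma finite_set_mult: "finite X \<Longrightarrow> finite Y \<Longrightarrow> finite (X <#> Y)"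
  unfolding set_mult_def by auto

lemma card_r_coset:
  assumes "X \<subseteq> carrier G" "g \<in> carrier G"
  shows "card (X #> g) = card X"
  using card_rcosets_equal[OF rcosetsI[OF assms] assms(1)] by simp

lemma card_le_card_set_mult:
  assumes "finite X" "finite Y" "X \<subseteq> carrier G" "b \<in> Y" "Y \<subseteq> carrier G"
  shows "card X \<le> card (X <#> Y)"
proof -
  have "X #> b \<subseteq> X <#> Y"
    using assms(4) unfolding subset_iff r_coset_mem set_mult_mem by blast
  then have "card (X #> b) \<le> card (X <#> Y)"
    using assms by (intro card_mono finite_set_mult) auto
  then show ?thesis
    using assms card_r_coset[OF assms(3) subsetD[OF assms(5,4)]] by simp
qed

lemma r_coset_stable_eq:
  assumes "finite X" "X \<subseteq> carrier G" "g \<in> carrier G" "X #> g \<subseteq> X"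
  shows "X #> g = X"
  using assms by (intro card_subset_eq) (auto simp: card_r_coset)

lemma r_coset_stable_inv:
  assumes "finite X" "X \<subseteq> carrier G" "g \<in> carrier G" "X #> g \<subseteq> X"
  shows "X #> inv g = X"
proof -
  have "X #> inv g = (X #> g) #> inv g"
    using r_coset_stable_eq[OF assms] by simp
  also have "\<dots> = X"
    using assms(2,3) by (simp add: coset_mult_assoc)
  finally show ?thesis .
qed

text \<open>Indeed, pick x \<in> X with xc \<notin> X; the translate S(xc) lies in Xc and misses X.\<close>

lemma card_union_translate_periodic:
  assumes "finite X" "X \<subseteq> carrier G" "S \<subseteq> carrier G" "c \<in> carrier G"
    and periods: "\<And>g. g \<in> S \<Longrightarrow> X #> g \<subseteq> X"
    and moved: "X #> c \<noteq> X"
  shows "card X + card S \<le> card (X \<union> (X #> c))"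
proof -
  have "\<not> X #> c \<subseteq> X"
    using r_coset_stable_eq[OF assms(1,2,4)] moved by blast
  then obtain x where x: "x \<in> X" "x \<otimes> c \<notin> X"
    unfolding subset_iff r_coset_mem by blast
  have xc: "x \<otimes> c \<in> carrier G"
    using x assms(2,4) by auto
  define T where "T = S #> (x \<otimes> c)"
  have T_sub: "T \<subseteq> X #> c"
  proof
    fix t assume "t \<in> T"
    then obtain g where g: "g \<in> S" "t = g \<otimes> (x \<otimes> c)"
      unfolding T_def r_coset_mem by blast
    have "t = (x \<otimes> g) \<otimes> c"
      using g x(1) assms(2-4) by (simp add: m_ac subsetD)
    moreover have "x \<otimes> g \<in> X"
      using periods[OF g(1)] x(1) unfolding subset_iff r_coset_mem by blast
    ultimately show "t \<in> X #> c"
      by (auto simp: r_coset_mem)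
  qed
  have T_disj: "X \<inter> T = {}"
  proof (rule ccontr)
    assume "X \<inter> T \<noteq> {}"
    then obtain g where g: "g \<in> S" "g \<otimes> (x \<otimes> c) \<in> X"
      unfolding T_def by (force simp: r_coset_mem)
    have "g \<otimes> (x \<otimes> c) \<otimes> inv g \<in> X #> inv g"
      using g(2) by (auto simp: r_coset_mem)
    moreover have "g \<otimes> (x \<otimes> c) \<otimes> inv g = x \<otimes> c"
      using subsetD[OF assms(3) g(1)] xc by (simp add: m_comm m_assoc[symmetric])
    ultimately show False
      using r_coset_stable_inv[OF assms(1,2) _ periods] g(1) assms(3) x(2) by auto
  qed
  have fin: "finite (X #> c)"
    using assms(1) by (simp add: r_coset_def)
  have "card T = card S"
    unfolding T_def using assms(3) xc by (rule card_r_coset)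
  then have "card X + card S = card (X \<union> T)"
    using card_Un_disjoint[OF assms(1) finite_subset[OF T_sub fin] T_disj] by simp
  also have "\<dots> \<le> card (X \<union> (X #> c))"
    using T_sub fin assms(1) by (intro card_mono) auto
  finally show ?thesis .
qed

lemma set_mult_r_coset_stable:
  assumes "A \<subseteq> carrier G" "B \<subseteq> carrier G" "g \<in> carrier G" "A #> g \<subseteq> A"
  shows "(A <#> B) #> g \<subseteq> A <#> B"
proof
  fix z assume "z \<in> (A <#> B) #> g"
  then obtain a b where ab: "a \<in> A" "b \<in> B" "z = a \<otimes> b \<otimes> g"
    by (auto simp: r_coset_mem set_mult_mem)
  then have "z = (a \<otimes> g) \<otimes> b"
    using assms(1-3) by (simp add: m_ac subsetD)
  moreover have "a \<otimes> g \<in> A"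
    using assms(4) ab(1) unfolding subset_iff r_coset_mem by blast
  ultimately show "z \<in> A <#> B"
    using ab(2) unfolding set_mult_mem by blast
qed

text \<open>The growth bound when some b \<in> B turns all of B b\<inverse> into periods of A:
  then they are periods of X = AB, and the periodic case applies with |X| \<ge> |A|.\<close>

lemma card_union_translate_set_mult_periodic:
  assumes "finite A" "finite B" "A \<subseteq> carrier G" "B \<subseteq> carrier G"
    and "c \<in> carrier G" "(A <#> B) #> c \<noteq> A <#> B"
    and b: "b \<in> B" "\<And>b'. b' \<in> B \<Longrightarrow> A #> (b' \<otimes> inv b) \<subseteq> A"
  shows "card A + card B \<le> card ((A <#> B) \<union> ((A <#> B) #> c))"
proof -
  define X where "X = A <#> B"
  have X: "finite X" "X \<subseteq> carrier G"
    unfolding X_def using assms(1-4) by (auto simp: finite_set_mult set_mult_closed)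
  have inv_b: "inv b \<in> carrier G"
    using b(1) assms(4) by auto
  have periods: "X #> g \<subseteq> X" if g: "g \<in> B #> inv b" for g
  proof -
    obtain b' where "b' \<in> B" "g = b' \<otimes> inv b"
      using g unfolding r_coset_mem by blast
    moreover have "g \<in> carrier G"
      using r_coset_subset_G[OF assms(4) inv_b] g by blast
    ultimately show ?thesis
      unfolding X_def using b(2) assms(3,4) by (intro set_mult_r_coset_stable) auto
  qed
  have "card X + card (B #> inv b) \<le> card (X \<union> (X #> c))"
    using r_coset_subset_G[OF assms(4) inv_b] assms(6) unfolding X_def[symmetric]
    by (intro card_union_translate_periodic[OF X _ assms(5) periods])
  moreover have "card A \<le> card X"
    unfolding X_def using card_le_card_set_mult[OF assms(1,2,3) b(1) assms(4)] .
  moreover have "card (B #> inv b) = card B"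
    using assms(4) inv_b by (rule card_r_coset)
  ultimately show ?thesis
    unfolding X_def by linarith
qed

definition dyson_left :: "'a set \<Rightarrow> 'a set \<Rightarrow> 'a \<Rightarrow> 'a set"
  where "dyson_left A B e = A \<union> (B #> e)"

definition dyson_right :: "'a set \<Rightarrow> 'a set \<Rightarrow> 'a \<Rightarrow> 'a set"
  where "dyson_right A B e = {b \<in> B. b \<otimes> e \<in> A}"

text \<open>The e-transform preserves |A| + |B|, since A \<inter> Be is the translate of B(e) by e.\<close>

lemma dyson_card:
  assumes "finite A" "finite B" "A \<subseteq> carrier G" "B \<subseteq> carrier G" "e \<in> carrier G"
  shows "card (dyson_left A B e) + card (dyson_right A B e) = card A + card B"
proof -
  have meet: "A \<inter> (B #> e) = dyson_right A B e #> e"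
    unfolding dyson_right_def by (auto simp: r_coset_mem)
  have "card A + card (B #> e) = card (dyson_left A B e) + card (A \<inter> (B #> e))"
    unfolding dyson_left_def using assms(1,2)
    by (intro card_Un_Int) (auto simp: r_coset_def)
  moreover have "dyson_right A B e \<subseteq> carrier G"
    using assms(4) unfolding dyson_right_def by auto
  ultimately show ?thesis
    using assms(4,5) by (simp add: meet card_r_coset)
qed

lemma dyson_set_mult_subset:
  assumes "A \<subseteq> carrier G" "B \<subseteq> carrier G" "e \<in> carrier G"
  shows "dyson_left A B e <#> dyson_right A B e \<subseteq> A <#> B"
proof
  fix y assume "y \<in> dyson_left A B e <#> dyson_right A B e"
  then obtain a b where ab: "a \<in> dyson_left A B e" "b \<in> B" "b \<otimes> e \<in> A" "y = a \<otimes> b"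
    unfolding set_mult_mem dyson_right_def by blast
  show "y \<in> A <#> B"
  proof (cases "a \<in> A")
    case True
    then show ?thesis using ab by (auto simp: set_mult_mem)
  next
    case False
    then obtain b' where b': "b' \<in> B" "a = b' \<otimes> e"
      using ab(1) False unfolding dyson_left_def by (auto simp: r_coset_mem)
    then have "y = (b \<otimes> e) \<otimes> b'"
      using ab assms by (simp add: m_ac subsetD)
    then show ?thesis
      using ab(3) b'(1) by (auto simp: set_mult_mem)
  qed
qed

lemma dyson_right_shrinks:
  assumes "finite B" "A \<subseteq> carrier G" "B \<subseteq> carrier G"
    and "a \<in> A" "b \<in> B" "b0 \<in> B" "a \<otimes> (b0 \<otimes> inv b) \<notin> A"
  shows "b \<in> dyson_right A B (a \<otimes> inv b)" "card (dyson_right A B (a \<otimes> inv b)) < card B"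
proof -
  have carr: "a \<in> carrier G" "b \<in> carrier G" "b0 \<in> carrier G"
    using assms by auto
  show "b \<in> dyson_right A B (a \<otimes> inv b)"
    unfolding dyson_right_def using assms(4,5) carr by (simp add: m_lcomm)
  have "b0 \<notin> dyson_right A B (a \<otimes> inv b)"
    unfolding dyson_right_def using assms(7) carr by (simp add: m_lcomm)
  then show "card (dyson_right A B (a \<otimes> inv b)) < card B"
    using assms(1,6) unfolding dyson_right_def by (intro psubset_card_mono) auto
qed

lemma dyson_transform_step:
  assumes "finite A" "finite B" "A \<subseteq> carrier G" "B \<subseteq> carrier G"
    and "a \<in> A" "b \<in> B" "b0 \<in> B" "a \<otimes> (b0 \<otimes> inv b) \<notin> A"
  obtains A1 B1 where "finite A1" "A1 \<subseteq> carrier G" "A1 \<noteq> {}"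
    and "finite B1" "B1 \<subseteq> carrier G" "B1 \<noteq> {}" "card B1 < card B"
    and "card A1 + card B1 = card A + card B"
    and "A1 <#> B1 \<subseteq> A <#> B" "A #> b \<subseteq> A1 <#> B1"
proof
  define e where "e = a \<otimes> inv b"
  have e: "e \<in> carrier G"
    unfolding e_def using assms(3-6) by auto
  note shrink = dyson_right_shrinks[OF assms(2-8), folded e_def]
  show "finite (dyson_left A B e)" "dyson_left A B e \<subseteq> carrier G" "dyson_left A B e \<noteq> {}"
    unfolding dyson_left_def using assms(1,2,3,5) r_coset_subset_G[OF assms(4) e]
    by (auto simp: r_coset_def)
  show "finite (dyson_right A B e)" "dyson_right A B e \<subseteq> carrier G"
    "dyson_right A B e \<noteq> {}" "card (dyson_right A B e) < card B"
    using shrink assms(2,4) unfolding dyson_right_def by auto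
  show "card (dyson_left A B e) + card (dyson_right A B e) = card A + card B"
    using assms(1-4) e by (rule dyson_card)
  show "dyson_left A B e <#> dyson_right A B e \<subseteq> A <#> B"
    using assms(3,4) e by (rule dyson_set_mult_subset)
  show "A #> b \<subseteq> dyson_left A B e <#> dyson_right A B e"
    using shrink(1) unfolding dyson_left_def subset_iff r_coset_mem set_mult_mem by blast
qed

lemma card_union_translate_set_mult:
  assumes "finite A" "finite B" "A \<subseteq> carrier G" "B \<subseteq> carrier G" "A \<noteq> {}" "B \<noteq> {}"
    and "c \<in> carrier G" "(A <#> B) #> c \<noteq> A <#> B"
  shows "card A + card B \<le> card ((A <#> B) \<union> ((A <#> B) #> c))"
  using assms
proof (induction "card B" arbitrary: A B rule: less_induct)
  case less
  define X where "X = A <#> B"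
  have X: "finite X" "X \<subseteq> carrier G"
    unfolding X_def using less.prems by (auto simp: finite_set_mult set_mult_closed)
  have fin_U: "finite (X \<union> (X #> c))"
    using X by (simp add: r_coset_def)
  show ?case
  proof (cases "\<exists>b\<in>B. \<forall>b'\<in>B. A #> (b' \<otimes> inv b) \<subseteq> A")
    case True
    then obtain b where "b \<in> B" "\<And>b'. b' \<in> B \<Longrightarrow> A #> (b' \<otimes> inv b) \<subseteq> A"
      by blast
    then show ?thesis
      unfolding X_def using less.prems by (intro card_union_translate_set_mult_periodic)
  next
    case False
    (* If the bound failed, then by induction the product set of every transform
       below is c-stable; these sets cover X, so X itself would be c-stable. *)
    have "X #> c \<subseteq> X" if bound_fails: "\<not> card A + card B \<le> card (X \<union> (X #> c))"
    proof
      fix z assume "z \<in> X #> c"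
      then obtain a' b where ab: "a' \<in> A" "b \<in> B" "z = a' \<otimes> b \<otimes> c"
        unfolding X_def by (auto simp: r_coset_mem set_mult_mem)
      obtain a b0 where "a \<in> A" "b0 \<in> B" "a \<otimes> (b0 \<otimes> inv b) \<notin> A"
        using False ab(2) unfolding subset_iff r_coset_mem by blast
      then obtain A1 B1 where A1: "finite A1" "A1 \<subseteq> carrier G" "A1 \<noteq> {}"
        and B1: "finite B1" "B1 \<subseteq> carrier G" "B1 \<noteq> {}" "card B1 < card B"
        and sum: "card A1 + card B1 = card A + card B"
        and D_sub: "A1 <#> B1 \<subseteq> X" and Ab: "A #> b \<subseteq> A1 <#> B1"
        using dyson_transform_step[OF less.prems(1-4) _ ab(2)] unfolding X_def by metis
      have D_stable: "(A1 <#> B1) #> c = A1 <#> B1"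
      proof (rule ccontr)
        assume "(A1 <#> B1) #> c \<noteq> A1 <#> B1"
        from less.hyps[OF B1(4) A1(1) B1(1) A1(2) B1(2) A1(3) B1(3) less.prems(7) this]
        have "card A1 + card B1 \<le> card ((A1 <#> B1) \<union> ((A1 <#> B1) #> c))" .
        also have "\<dots> \<le> card (X \<union> (X #> c))"
          using D_sub fin_U unfolding r_coset_def by (intro card_mono) blast+
        finally show False
          using bound_fails sum by linarith
      qed
      have "a' \<otimes> b \<in> A1 <#> B1"
        using Ab ab(1) unfolding subset_iff r_coset_mem by blast
      then have "z \<in> (A1 <#> B1) #> c"
        using ab(3) by (auto simp: r_coset_mem)
      then show "z \<in> X"
        using D_stable D_sub by auto
    qed
    then show ?thesis
      using r_coset_stable_eq[OF X less.prems(7)] less.prems(8) unfolding X_def by blast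
  qed
qed

lemma set_mult_eq_UN_r_coset: "X <#> C = (\<Union>c\<in>C. X #> c)"
  unfolding set_mult_def r_coset_def by auto

end

theorem mainTheorem2:
  fixes G (structure)
  assumes "comm_group G"
    and "A \<subseteq> carrier G" and "B \<subseteq> carrier G" and "C \<subseteq> carrier G"
    and "finite A" and "finite B" and "finite C"
    and "A \<noteq> {}" and "B \<noteq> {}" and "C \<noteq> {}"
    and "\<one> \<in> C"
  shows "(A <#> B) <#> C = A <#> B \<or> card ((A <#> B) <#> C) \<ge> card A + card B"
proof (cases "(A <#> B) <#> C = A <#> B")
  case False
  interpret comm_group G by fact
  define X where "X = A <#> B"
  from False obtain c where c: "c \<in> C" "X #> c \<noteq> X"
    using assms(10) unfolding X_def set_mult_eq_UN_r_coset by auto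
  have X: "finite X" "X \<subseteq> carrier G"
    unfolding X_def using assms by (auto simp: finite_set_mult set_mult_closed)
  have "X \<union> (X #> c) \<subseteq> X <#> C"
    using X(2) assms(11) c(1) unfolding set_mult_eq_UN_r_coset
    by (metis UN_upper coset_mult_one Un_least)
  then have "card (X \<union> (X #> c)) \<le> card (X <#> C)"
    using X(1) assms(7) by (intro card_mono finite_set_mult)
  moreover have "card A + card B \<le> card (X \<union> (X #> c))"
    unfolding X_def using subsetD[OF assms(4) c(1)] c(2)[unfolded X_def]
    by (intro card_union_translate_set_mult assms)
  ultimately have "card A + card B \<le> card ((A <#> B) <#> C)"
    unfolding X_def by linarith
  then show ?thesis by simp
qed simp

end
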